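(* (1) If $t\ge2$ and $\mu_B(t)\le u\le1$, then $\mathfrak{e}^B_{t,u}\in\mathcal{E}(\mathcal{P}^{s+}_{3,5})$. (2) If $t\ge2$, $\mu_B(t)\le u<1$ and $f\in\mathcal{P}^{s+}_{3,5}$ satisfies $f(t,1,1)=f(0,u,1)=f_b(0,u,1)=0$, then $f=\lambda\mathfrak{e}^B_{t,u}$ for some $\lambda\ge0$. (3) If $t\ge2$ and $f\in\mathcal{P}^{s+}_{3,5}$ satisfies $f(t,1,1)=f(0,1,1)=f_{bb}(0,1,1)=0$, then $f=\lambda\mathfrak{e}^B_{t,1}$ for some $\lambda\ge0$. (4) $\mathfrak{e}^B_{2,1}=\mathfrak{e}^C_2$.
   Context: Let $a,b,c$ be variables. For nonnegative integers $m,n$ put $S_{m,n}=a^mb^n+b^mc^n+c^ma^n$, $S_n=S_{n,0}=a^n+b^n+c^n$, $T_{m,n}=S_{m,n}+S_{n,m}$, $U=abc$ (so $S_{1,1}=ab+bc+ca$). Let $\mathcal{H}^s_{3,5}$ be the real vector space of symmetric homogeneous polynomials of degree 5 in $\mathbb{R}[a,b,c]$; it has basis $s_0=S_5-US_{1,1}$, $s_1=T_{4,1}-2US_{1,1}$, $s_2=T_{3,2}-2US_{1,1}$, $s_3=US_2-US_{1,1}$, $s_4=US_{1,1}$. Let $\mathcal{P}^{s+}_{3,5}=\{f\in\mathcal{H}^s_{3,5}: f(a,b,c)\ge 0\text{ for all }a,b,c\ge0\}$. For a closed convex cone $\mathcal{P}$, an element $f\in\mathcal{P}\setminus\{0\}$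 is extremal if whenever $f=g+h$ with $g,h\in\mathcal{P}$ we have $g,h\in\mathbb{R}_{\ge0}f$; $\mathcal{E}(\mathcal{P})$ is the set of extremal elements. $f_b=\partial f/\partial b$, $f_{bb}=\partial^2f/\partial b^2$. Auxiliary functions: $\mu_R(t)=2-t^2+t\sqrt{(t-1)(t+2)}$, $\mu_B(t)=\tfrac12\big(\mu_R(t)-\sqrt{\mu_R(t)^2-4}\big)$ (for $t\ge2$), $\omega(u)=u+\frac1u-2$. Family B: with $p^B_1(t,w)=-2w-3$, $p^B_2(t,w)=w^2+2w+2$, $p^B_3(t,w)=-\frac{2t^3+4t^2+5t+1}{t^2(t+2)}w^2+\frac{2(4t^2+5t+3)}{t+2}w-\frac{3t^3-7t^2-12t-8}{t+2}$, $p^B_4(t,w)=\frac{(t-1)^3(-w^2-2t^2w+t^2(t-2))}{t^2(t+2)}$, put $\mathfrak{e}^B_{t,u}=s_0+\sum_{i=1}^4p^B_i(t,\omega(u))s_i$. Family C: $\mathfrak{e}^C_t=s_0-(t+1)s_1+ts_2+(t+1)^2s_3$. *)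

theory Defs
  imports "HOL-Analysis.Analysis"
begin

type_synonym form3 = "real \<Rightarrow> real \<Rightarrow> real \<Rightarrow> real"

definition Smn :: "nat \<Rightarrow> nat \<Rightarrow> form3" where
  "Smn m n a b c = a^m * b^n + b^m * c^n + c^m * a^n"

definition Sn :: "nat \<Rightarrow> form3" where
  "Sn n = Smn n 0"

definition Tmn :: "nat \<Rightarrow> nat \<Rightarrow> form3" where
  "Tmn m n a b c = Smn m n a b c + Smn n m a b c"

definition U :: form3 where
  "U a b c = a * b * c"

definition sb :: "nat \<Rightarrow> form3" where
  "sb i a b c =
     (if i = 0 then Sn 5 a b c - U a b c * Smn 1 1 a b c
      else if i = 1 then Tmn 4 1 a b c - 2 * U a b c * Smn 1 1 a b c
      else if i = 2 then Tmn 3 2 a b c - 2 * U a b c * Smn 1 1 a b c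
      else if i = 3 then U a b c * Sn 2 a b c - U a b c * Smn 1 1 a b c
      else U a b c * Smn 1 1 a b c)"

definition form_of :: "(nat \<Rightarrow> real) \<Rightarrow> form3" where
  "form_of x a b c = (\<Sum>i<5. x i * sb i a b c)"

definition H35 :: "form3 set" where
  "H35 = range form_of"

definition P35 :: "form3 set" where
  "P35 = {f \<in> H35. \<forall>a b c. a \<ge> 0 \<longrightarrow> b \<ge> 0 \<longrightarrow> c \<ge> 0 \<longrightarrow> f a b c \<ge> 0}"

definition scal :: "real \<Rightarrow> form3 \<Rightarrow> form3" where
  "scal l f = (\<lambda>a b c. l * f a b c)"

definition extremal :: "form3 set \<Rightarrow> form3 \<Rightarrow> bool" where
  "extremal P f \<longleftrightarrow> f \<in> P \<and> f \<noteq> (\<lambda>a b c. 0) \<and>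
     (\<forall>g h. g \<in> P \<longrightarrow> h \<in> P \<longrightarrow> f = (\<lambda>a b c. g a b c + h a b c) \<longrightarrow>
        (\<exists>l\<ge>0. g = scal l f) \<and> (\<exists>l\<ge>0. h = scal l f))"

definition muR :: "real \<Rightarrow> real" where
  "muR t = 2 - t^2 + t * sqrt ((t - 1) * (t + 2))"

definition muB :: "real \<Rightarrow> real" where
  "muB t = (muR t - sqrt (muR t ^ 2 - 4)) / 2"

definition omega :: "real \<Rightarrow> real" where
  "omega u = u + 1 / u - 2"

definition pB :: "nat \<Rightarrow> real \<Rightarrow> real \<Rightarrow> real" where
  "pB i t w =
     (if i = 1 then -2 * w - 3
      else if i = 2 then w^2 + 2 * w + 2
      else if i = 3 then
        - (2*t^3 + 4*t^2 + 5*t + 1) / (t^2 * (t + 2)) * w^2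
        + 2 * (4*t^2 + 5*t + 3) / (t + 2) * w
        - (3*t^3 - 7*t^2 - 12*t - 8) / (t + 2)
      else (t - 1)^3 * (- (w^2) - 2 * t^2 * w + t^2 * (t - 2)) / (t^2 * (t + 2)))"

definition eB :: "real \<Rightarrow> real \<Rightarrow> form3" where
  "eB t u a b c = sb 0 a b c + (\<Sum>i\<in>{1..4}. pB i t (omega u) * sb i a b c)"

definition eC :: "real \<Rightarrow> form3" where
  "eC t a b c = sb 0 a b c - (t + 1) * sb 1 a b c + t * sb 2 a b c + (t + 1)^2 * sb 3 a b c"

end

theory Submission
  imports Defs
begin

text \<open>A symmetric quintic equals G(p,q) + r H(p,q) in p = a+b+c, q = ab+bc+ca, r = abc.
  Being affine in r, it is nonnegative on the orthant once it is nonnegative where r is extremal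
  for fixed p, q, i.e. (up to scaling) on the curves (z,1,1) and (0,z,1).  On these curves eB
  factors as (z - t)^2 times a cofactor that is nonnegative once u \<ge> muB t, and as
  (z + 1)(z^2 - (omega u + 2) z + 1)^2.  For extremality, a summand of eB inherits the zeros
  (t,1,1) and (0,u,1); nonnegativity makes them double zeros, and the resulting linear conditions
  (with a squeeze on the second derivative when u = 1) leave a single ray.\<close>

definition psd_form :: "(nat \<Rightarrow> real) \<Rightarrow> bool" where
  "psd_form x \<longleftrightarrow> (\<forall>a b c. 0 \<le> a \<longrightarrow> 0 \<le> b \<longrightarrow> 0 \<le> c \<longrightarrow> 0 \<le> form_of x a b c)"

lemma P35_iff_psd_form: "f \<in> P35 \<longleftrightarrow> (\<exists>x. f = form_of x \<and> psd_form x)"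
  unfolding P35_def H35_def psd_form_def by auto

definition form_G :: "(nat \<Rightarrow> real) \<Rightarrow> real \<Rightarrow> real \<Rightarrow> real" where
  "form_G x p q = x 0 * (p^5 - 5*p^3*q + 5*p*q^2) + x 1 * (p^3*q - 3*p*q^2) + x 2 * (p*q^2)"

definition form_H :: "(nat \<Rightarrow> real) \<Rightarrow> real \<Rightarrow> real \<Rightarrow> real" where
  "form_H x p q = x 0 * (5*p^2 - 6*q) + x 1 * (3*q - p^2) + x 2 * (-2*p^2 - 3*q)
     + x 3 * (p^2 - 3*q) + x 4 * q"

lemma sum_lessThan_5: "(\<Sum>i<(5::nat). f i) = f 0 + f 1 + f 2 + f 3 + (f 4 :: 'a::comm_monoid_add)"
  by (simp add: numeral_eq_Suc add.assoc)

lemma form_of_pqr: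
  "form_of x a b c = form_G x (a+b+c) (a*b+b*c+c*a) + a*b*c * form_H x (a+b+c) (a*b+b*c+c*a)"
  unfolding form_of_def sum_lessThan_5 form_G_def form_H_def
  by (simp add: sb_def Sn_def Tmn_def Smn_def U_def) algebra

lemma form_of_homogeneous: "form_of x (k*a) (k*b) (k*c) = k^5 * form_of x a b c"
  unfolding form_of_pqr form_G_def form_H_def by algebra

lemma form_of_vertex: "form_of x a 0 0 = x 0 * a^5" "form_of x 0 a 0 = x 0 * a^5"
  unfolding form_of_pqr form_G_def by simp_all

lemma form_of_two_equal_pq:
  "form_of x ((p + 2*e)/3) ((p - e)/3) ((p - e)/3)
     = form_G x p ((p^2 - e^2)/3) + (p + 2*e)*(p - e)^2/27 * form_H x p ((p^2 - e^2)/3)"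
proof -
  have "(p + 2*e)/3 + (p - e)/3 + (p - e)/3 = p"
    and "(p + 2*e)/3 * ((p - e)/3) + (p - e)/3 * ((p - e)/3) + (p - e)/3 * ((p + 2*e)/3)
         = (p^2 - e^2)/3"
    and "(p + 2*e)/3 * ((p - e)/3) * ((p - e)/3) = (p + 2*e)*(p - e)^2/27"
    by (simp_all add: field_simps power2_eq_square)
  then show ?thesis by (simp only: form_of_pqr)
qed

lemma form_of_face_pq: "form_of x 0 ((p - d)/2) ((p + d)/2) = form_G x p ((p^2 - d^2)/4)"
proof -
  have "0 + (p - d)/2 + (p + d)/2 = p" and "0 * ((p - d)/2) + (p - d)/2 * ((p + d)/2) + (p + d)/2 * 0
         = (p^2 - d^2)/4"
    by (simp_all add: field_simps power2_eq_square)
  then show ?thesis by (simp only: form_of_pqr)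
qed

lemma discriminant_pq_nonneg: "0 \<le> (a+b+c)^2 - 3*(a*b+b*c+c*a)" for a b c :: real
proof -
  have "(a+b+c)^2 - 3*(a*b+b*c+c*a) = ((a-b)^2 + (b-c)^2 + (c-a)^2)/2" by algebra
  then show ?thesis by (simp only:) simp
qed

lemma abc_bounds_two_equal:
  fixes a b c :: real
  defines "p \<equiv> a + b + c" and "e \<equiv> sqrt ((a+b+c)^2 - 3*(a*b+b*c+c*a))"
  shows "(p - 2*e)*(p + e)^2/27 \<le> a*b*c" and "a*b*c \<le> (p + 2*e)*(p - e)^2/27"
proof -
  define q r where "q = a*b + b*c + c*a" and "r = a*b*c"
  have e: "0 \<le> e" "e^2 = p^2 - 3*q"
    using discriminant_pq_nonneg[of a b c] unfolding e_def p_def q_def by simp_all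
  define r1 r2 where "r1 = (p + 2*e)*(p - e)^2/27" and "r2 = (p - 2*e)*(p + e)^2/27"
  have "r1 + r2 = (2*p^3 - 6*p*e^2)/27" and "r1 * r2 = (p^2 - 4*e^2)*(p^2 - e^2)^2/729"
    unfolding r1_def r2_def by (simp_all add: field_simps) algebra+
  then have sum: "r1 + r2 = (18*p*q - 4*p^3)/27" and prod: "r1 * r2 = (4*q - p^2)*q^2/27"
    unfolding e(2) by (simp_all add: field_simps) algebra+
  have "(a-b)^2*(b-c)^2*(c-a)^2 = p^2*q^2 - 4*q^3 - 4*p^3*r + 18*p*q*r - 27*r^2"
    unfolding p_def q_def r_def by algebra
  also have "\<dots> = 27*(r1 + r2)*r - 27*(r1*r2) - 27*r^2"
    unfolding sum prod by (simp add: field_simps) algebra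
  also have "\<dots> = -27*((r - r1)*(r - r2))" by algebra
  finally have "0 \<le> -27*((r - r1)*(r - r2))"
    by (metis zero_le_power2 mult_nonneg_nonneg)
  then have "(r - r1)*(r - r2) \<le> 0" by linarith
  moreover have "r2 \<le> r1"
  proof -
    have "r1 - r2 = 4*e^3/27" unfolding r1_def r2_def by (simp add: field_simps) algebra
    moreover have "0 \<le> e^3" using e(1) by simp
    ultimately show ?thesis by linarith
  qed
  ultimately show "r2 \<le> a*b*c" "a*b*c \<le> r1"
    unfolding mult_le_0_iff r_def by linarith+
qed

lemma affine_nonneg_between:
  fixes G H r0 r1 r :: real
  assumes "0 \<le> G + r0*H" "0 \<le> G + r1*H" "r0 \<le> r" "r \<le> r1"
  shows "0 \<le> G + r*H"
proof (cases "0 \<le> H")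
  case True
  then have "r0*H \<le> r*H" using assms by (simp add: mult_right_mono)
  then show ?thesis using assms by linarith
next
  case False
  then have "r1*H \<le> r*H" using assms by (simp add: mult_right_mono_neg)
  then show ?thesis using assms by linarith
qed

lemma psd_formI:
  assumes diag: "\<And>z. 0 \<le> z \<Longrightarrow> 0 \<le> form_of x z 1 1"
    and face: "\<And>z. 0 \<le> z \<Longrightarrow> 0 \<le> form_of x 0 z 1"
    and vertex: "0 \<le> x 0"
  shows "psd_form x"
proof -
  have two_equal: "0 \<le> form_of x X Y Y" if "0 \<le> X" "0 \<le> Y" for X Y
  proof (cases "Y = 0")
    case True then show ?thesis using vertex that by (simp add: form_of_vertex)
  next
    case False
    then have "form_of x X Y Y = Y^5 * form_of x (X/Y) 1 1"
      using form_of_homogeneous[of x Y "X/Y" 1 1] by simp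
    then show ?thesis using diag[of "X/Y"] that by simp
  qed
  have zero_entry: "0 \<le> form_of x 0 Y Z" if "0 \<le> Y" "0 \<le> Z" for Y Z
  proof (cases "Z = 0")
    case True then show ?thesis using vertex that by (simp add: form_of_vertex)
  next
    case False
    then have "form_of x 0 Y Z = Z^5 * form_of x 0 (Y/Z) 1"
      using form_of_homogeneous[of x Z 0 "Y/Z" 1] by simp
    then show ?thesis using face[of "Y/Z"] that by simp
  qed
  show ?thesis unfolding psd_form_def
  proof (intro allI impI)
    fix a b c :: real assume abc: "0 \<le> a" "0 \<le> b" "0 \<le> c"
    define p q e where "p = a + b + c" and "q = a*b + b*c + c*a"
      and "e = sqrt ((a+b+c)^2 - 3*(a*b+b*c+c*a))"
    have e: "0 \<le> e" "e^2 = p^2 - 3*q"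
      using discriminant_pq_nonneg[of a b c] unfolding e_def p_def q_def by simp_all
    then have q: "q = (p^2 - e^2)/3" by simp
    have pq: "0 \<le> p" "0 \<le> q" using abc unfolding p_def q_def by simp_all
    have "e^2 \<le> p^2" using e pq by linarith
    then have sp: "e \<le> p" using pq power2_le_imp_le by blast
    have r: "(p - 2*e)*(p + e)^2/27 \<le> a*b*c" "a*b*c \<le> (p + 2*e)*(p - e)^2/27"
      using abc_bounds_two_equal[of a b c] unfolding p_def e_def by simp_all
    have upper: "0 \<le> form_G x p q + (p + 2*e)*(p - e)^2/27 * form_H x p q"
      using two_equal[of "(p + 2*e)/3" "(p - e)/3"] e sp
      unfolding form_of_two_equal_pq q by simp
    have "\<exists>r0\<le>a*b*c. 0 \<le> form_G x p q + r0 * form_H x p q"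
    proof (cases "2*e \<le> p")
      case True
      have "0 \<le> form_G x p q + (p - 2*e)*(p + e)^2/27 * form_H x p q"
        using two_equal[of "(p + 2*(-e))/3" "(p - (-e))/3"] e True
        unfolding form_of_two_equal_pq q by simp
      then show ?thesis using r(1) by blast
    next
      case False
      define d where "d = sqrt (p^2 - 4*q)"
      have "p^2 \<le> (2*e)^2" using False pq by (intro power_mono) simp_all
      then have d: "0 \<le> d" "d^2 = p^2 - 4*q" using e unfolding d_def by simp_all
      then have "d^2 \<le> p^2" using pq by linarith
      then have "d \<le> p" using pq power2_le_imp_le by blast
      then have "0 \<le> form_G x p q"
        using zero_entry[of "(p - d)/2" "(p + d)/2"] d unfolding form_of_face_pq by (simp add: d(2))
      then show ?thesis using abc by (intro exI[of _ 0]) simp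
    qed
    then show "0 \<le> form_of x a b c"
      using affine_nonneg_between[OF _ upper _ r(2)] unfolding form_of_pqr p_def[symmetric] q_def[symmetric]
      by blast
  qed
qed

lemma form_of_z_1_1: "form_of x z 1 1 = x 0 * (z^5 - 2*z^2 - z + 2) + x 1 * (2*z^4 - 4*z^2 + 2)
   + x 2 * (2*z^3 - 2*z^2 - 2*z + 2) + x 3 * (z*(z - 1)^2) + x 4 * (z*(2*z + 1))"
  unfolding form_of_pqr form_G_def form_H_def by algebra

lemma form_of_0_z_1: "form_of x 0 z 1 = x 0 * (z^5 + 1) + x 1 * (z^4 + z) + x 2 * (z^3 + z^2)"
  unfolding form_of_pqr form_G_def by algebra

definition deriv_z_1_1 :: "(nat \<Rightarrow> real) \<Rightarrow> real \<Rightarrow> real" where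
  "deriv_z_1_1 x z = x 0 * (5*z^4 - 4*z - 1) + x 1 * (8*z^3 - 8*z) + x 2 * (6*z^2 - 4*z - 2)
     + x 3 * (3*z^2 - 4*z + 1) + x 4 * (4*z + 1)"

definition deriv_0_z_1 :: "(nat \<Rightarrow> real) \<Rightarrow> real \<Rightarrow> real" where
  "deriv_0_z_1 x z = x 0 * (5*z^4) + x 1 * (4*z^3 + 1) + x 2 * (3*z^2 + 2*z)"

definition deriv2_0_z_1 :: "(nat \<Rightarrow> real) \<Rightarrow> real \<Rightarrow> real" where
  "deriv2_0_z_1 x z = x 0 * (20*z^3) + x 1 * (12*z^2) + x 2 * (6*z + 2)"

lemma form_of_z_1_1_has_real_derivative: "((\<lambda>z. form_of x z 1 1) has_real_derivative deriv_z_1_1 x z) (at z)"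
  unfolding form_of_z_1_1 deriv_z_1_1_def
  by (auto intro!: derivative_eq_intros simp: algebra_simps power2_eq_square)

lemma form_of_0_z_1_has_real_derivative: "((\<lambda>z. form_of x 0 z 1) has_real_derivative deriv_0_z_1 x z) (at z)"
  unfolding form_of_0_z_1 deriv_0_z_1_def
  by (auto intro!: derivative_eq_intros simp: algebra_simps power2_eq_square)

lemma deriv_0_z_1_has_real_derivative: "(deriv_0_z_1 x has_real_derivative deriv2_0_z_1 x z) (at z)"
  unfolding deriv2_0_z_1_def deriv_0_z_1_def
  by (auto intro!: derivative_eq_intros simp: algebra_simps power2_eq_square)

lemma deriv_form_of_0_z_1: "deriv (\<lambda>b. form_of x 0 b 1) = deriv_0_z_1 x"
  using DERIV_imp_deriv[OF form_of_0_z_1_has_real_derivative] by (intro ext) simp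

lemma deriv2_form_of_0_z_1: "deriv (deriv (\<lambda>b. form_of x 0 b 1)) = deriv2_0_z_1 x"
  unfolding deriv_form_of_0_z_1 using DERIV_imp_deriv[OF deriv_0_z_1_has_real_derivative] by (intro ext) simp

lemma psd_form_deriv_z_1_1_zero:
  assumes "psd_form x" "0 < t" "form_of x t 1 1 = 0"
  shows "deriv_z_1_1 x t = 0"
proof (rule DERIV_local_min[OF form_of_z_1_1_has_real_derivative])
  show "\<forall>y. \<bar>t - y\<bar> < t \<longrightarrow> form_of x t 1 1 \<le> form_of x y 1 1"
    using assms unfolding psd_form_def by auto
qed (use assms in simp)

lemma psd_form_deriv_0_z_1_zero:
  assumes "psd_form x" "0 < u" "form_of x 0 u 1 = 0"
  shows "deriv_0_z_1 x u = 0"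
proof (rule DERIV_local_min[OF form_of_0_z_1_has_real_derivative])
  show "\<forall>y. \<bar>u - y\<bar> < u \<longrightarrow> form_of x 0 u 1 \<le> form_of x 0 y 1"
    using assms unfolding psd_form_def by auto
qed (use assms in simp)

definition eB_coeffs :: "real \<Rightarrow> real \<Rightarrow> nat \<Rightarrow> real" where
  "eB_coeffs t w i = (if i = 0 then 1 else pB i t w)"

lemma eB_eq_form_of: "eB t u = form_of (eB_coeffs t (omega u))"
  unfolding eB_def form_of_def sum_lessThan_5 eB_coeffs_def
  by (intro ext) (simp add: numeral_eq_Suc atLeastAtMostSuc_conv add.assoc)

lemma eB_coeffs_012:
  "eB_coeffs t w 0 = 1" "eB_coeffs t w 1 = -2*w - 3" "eB_coeffs t w 2 = w^2 + 2*w + 2"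
  by (simp_all add: eB_coeffs_def pB_def)

lemma eB_coeffs_34:
  assumes "0 < t"
  shows "t^2*(t + 2) * eB_coeffs t w 3 = - (2*t^3 + 4*t^2 + 5*t + 1) * w^2
           + 2*t^2*(4*t^2 + 5*t + 3) * w - t^2*(3*t^3 - 7*t^2 - 12*t - 8)" (is ?c3)
    and "t^2*(t + 2) * eB_coeffs t w 4 = (t - 1)^3 * (- (w^2) - 2*t^2*w + t^2*(t - 2))" (is ?c4)
proof -
  have "(t + 2) * inverse (t + 2) = 1" "t^2 * inverse (t^2) = 1" using assms by simp_all
  then show ?c3 ?c4
    unfolding eB_coeffs_def pB_def by (simp_all add: divide_inverse inverse_mult_distrib) algebra+
qed

definition eB_cofactor :: "real \<Rightarrow> real \<Rightarrow> real \<Rightarrow> real" where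
  "eB_cofactor t w z = t^2*(t + 2)*z^3 + (2*t^4 - 4*t^3*w - 2*t^3 - 8*t^2*w - 12*t^2)*z^2
     + (t^4 - 2*t^3*w - 8*t^3 + 14*t^2*w + 16*t^2 - 5*t*w^2 - w^2)*z + (2*t + 4)*w^2"

lemma eB_coeffs_z_1_1:
  assumes "0 < t"
  shows "t^2*(t + 2) * form_of (eB_coeffs t w) z 1 1 = (z - t)^2 * eB_cofactor t w z"
proof -
  have "t^2*(t + 2) * form_of (eB_coeffs t w) z 1 1
      = t^2*(t + 2) * (z^5 - 2*z^2 - z + 2) + t^2*(t + 2) * (-2*w - 3) * (2*z^4 - 4*z^2 + 2)
        + t^2*(t + 2) * (w^2 + 2*w + 2) * (2*z^3 - 2*z^2 - 2*z + 2)
        + (t^2*(t + 2) * eB_coeffs t w 3) * (z*(z - 1)^2)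
        + (t^2*(t + 2) * eB_coeffs t w 4) * (z*(2*z + 1))"
    unfolding form_of_z_1_1 eB_coeffs_012 by algebra
  then show ?thesis
    unfolding eB_coeffs_34[OF assms] eB_cofactor_def by algebra
qed

lemma eB_coeffs_0_z_1: "form_of (eB_coeffs t w) 0 z 1 = (z + 1)*(z^2 - (w + 2)*z + 1)^2"
  unfolding form_of_0_z_1 eB_coeffs_012 by algebra

lemma eB_coeffs_deriv_z_1_1:
  assumes "0 < t"
  shows "deriv_z_1_1 (eB_coeffs t w) t = 0"
proof -
  have "t^2*(t + 2) * deriv_z_1_1 (eB_coeffs t w) t
      = t^2*(t + 2) * (5*t^4 - 4*t - 1) + t^2*(t + 2) * (-2*w - 3) * (8*t^3 - 8*t)
        + t^2*(t + 2) * (w^2 + 2*w + 2) * (6*t^2 - 4*t - 2)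
        + (t^2*(t + 2) * eB_coeffs t w 3) * (3*t^2 - 4*t + 1)
        + (t^2*(t + 2) * eB_coeffs t w 4) * (4*t + 1)"
    unfolding deriv_z_1_1_def eB_coeffs_012 by algebra
  also have "\<dots> = 0"
    unfolding eB_coeffs_34[OF assms] by algebra
  finally show ?thesis using assms by simp
qed

lemma eB_coeffs_deriv_0_z_1:
  assumes "0 < u"
  shows "deriv_0_z_1 (eB_coeffs t (omega u)) u = 0"
proof -
  define w where "w = omega u"
  have root: "u^2 - (w + 2)*u + 1 = 0"
    unfolding w_def omega_def using assms by (simp add: field_simps power2_eq_square)
  have "deriv_0_z_1 (eB_coeffs t w) u
      = (u^2 - (w + 2)*u + 1)^2 + 2*(u + 1)*(u^2 - (w + 2)*u + 1)*(2*u - (w + 2))"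
    unfolding deriv_0_z_1_def eB_coeffs_012 by algebra
  then show ?thesis unfolding w_def[symmetric] root by simp
qed

lemma eB_coeffs_0_u_1:
  assumes "0 < u"
  shows "form_of (eB_coeffs t (omega u)) 0 u 1 = 0"
proof -
  have "u^2 - (omega u + 2)*u + 1 = 0"
    unfolding omega_def using assms by (simp add: field_simps power2_eq_square)
  then show ?thesis unfolding eB_coeffs_0_z_1 by simp
qed

lemma eB_cofactor_nonneg:
  assumes t: "2 \<le> t" and w: "0 \<le> w" and g: "0 \<le> t^2*(t - 2) - 2*t^2*w - w^2" and z: "0 \<le> z"
  shows "0 \<le> eB_cofactor t w z"
proof -
  define k where "k = 2*(t + 2)*z + t - 7"
  define H where "H = (t + 2)*z^2 + 2*(t - 3)*(t + 2)*z + (t - 4)^2"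
  show ?thesis
  proof (cases "0 \<le> k")
    case True
    have "eB_cofactor t w z = (t + 2)*(z - 1)^2*(t^2*z + 2*w^2) + (t^2*(t - 2) - 2*t^2*w - w^2)*z*k"
      unfolding eB_cofactor_def k_def by algebra
    moreover have "0 \<le> (t^2*(t - 2) - 2*t^2*w - w^2)*z*k" using g z True by simp
    ultimately show ?thesis using t z by simp
  next
    case False
    have H: "0 \<le> H"
    proof (cases "3 \<le> t")
      case True
      then show ?thesis unfolding H_def using z by simp
    next
      case False
      have "t*(t - 3) \<le> 0" using False t by (simp add: mult_nonneg_nonpos)
      then have "t^2 - 3*t - 1 \<le> 0" by (simp add: algebra_simps power2_eq_square)
      then have "0 \<le> (t - 2)*(-(t^2 - 3*t - 1))" using t by simp
      moreover have "H = (t + 2)*(z + t - 3)^2 + (t - 2)*(-(t^2 - 3*t - 1))"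
        unfolding H_def by algebra
      ultimately show ?thesis using t by simp
    qed
    have "eB_cofactor t w z = t^2*z*H + 2*(t + 2)*(z - 1)^2*w^2 + 2*t^2*z*w*(-k) + z*w^2*(-k)"
      unfolding eB_cofactor_def H_def k_def by algebra
    moreover have "0 \<le> t^2*z*H" using H z by simp
    moreover have "0 \<le> 2*t^2*z*w*(-k)" "0 \<le> z*w^2*(-k)"
      using z w False by (intro mult_nonneg_nonneg; simp)+
    moreover have "0 \<le> 2*(t + 2)*(z - 1)^2*w^2" using t by simp
    ultimately show ?thesis by linarith
  qed
qed

lemma psd_eB_coeffs:
  assumes t: "2 \<le> t" and w: "0 \<le> w" and g: "0 \<le> t^2*(t - 2) - 2*t^2*w - w^2"
  shows "psd_form (eB_coeffs t w)"
proof (rule psd_formI)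
  fix z :: real assume z: "0 \<le> z"
  have "0 \<le> (z - t)^2 * eB_cofactor t w z"
    using eB_cofactor_nonneg[OF t w g z] by simp
  then have "0 \<le> t^2*(t + 2) * form_of (eB_coeffs t w) z 1 1"
    using eB_coeffs_z_1_1[of t w z] t by simp
  moreover have "0 < t^2*(t + 2)" using t by simp
  ultimately show "0 \<le> form_of (eB_coeffs t w) z 1 1" by (simp add: zero_le_mult_iff)
  show "0 \<le> form_of (eB_coeffs t w) 0 z 1" unfolding eB_coeffs_0_z_1 using z by simp
qed (simp add: eB_coeffs_012)

text \<open>muB t is the root below 1 of u + 1/u = muR t, so omega (muB t) = muR t - 2.\<close>
lemma muB_pos_omega:
  assumes "2 \<le> t"
  shows "0 < muB t" and "omega (muB t) = muR t - 2"
proof -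
  define m where "m = muR t"
  have "t^2 \<le> (t - 1)*(t + 2)" using assms by (simp add: algebra_simps power2_eq_square)
  then have "t \<le> sqrt ((t - 1)*(t + 2))" by (rule real_le_rsqrt)
  then have "t*t \<le> t * sqrt ((t - 1)*(t + 2))" using assms by (simp add: mult_left_mono)
  then have m: "2 \<le> m" unfolding m_def muR_def by (simp add: power2_eq_square)
  define r where "r = sqrt (m^2 - 4)"
  have "4 \<le> m^2" using m power_mono[of 2 m 2] by simp
  then have r: "0 \<le> r" "r^2 = m^2 - 4" unfolding r_def by simp_all
  then have "r < m" using m by (intro power_less_imp_less_base[of r 2 m]) simp_all
  moreover have mu: "muB t = (m - r)/2" unfolding muB_def m_def r_def ..
  ultimately show pos: "0 < muB t" by simp
  have "muB t * (m - muB t) = 1" unfolding mu using r(2) by (simp add: field_simps) algebra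
  then have "1 / muB t = m - muB t" using pos by (simp add: field_simps)
  then show "omega (muB t) = muR t - 2" unfolding omega_def m_def by simp
qed

lemma omega_nonneg: "0 < u \<Longrightarrow> 0 \<le> omega u"
proof -
  assume u: "0 < u"
  then have "omega u = (u - 1)^2/u" unfolding omega_def by (simp add: field_simps power2_eq_square)
  then show ?thesis using u by simp
qed

lemma omega_1: "omega 1 = 0"
  unfolding omega_def by simp

lemma omega_antimono: assumes "0 < v" "v \<le> u" "u \<le> 1" shows "omega u \<le> omega v"
proof -
  have "u * v \<le> 1" "0 < u * v" using assms mult_mono[of u 1 v 1] by simp_all
  then have "(u - v)/1 \<le> (u - v)/(u * v)" using assms by (intro divide_left_mono) auto
  moreover have "1/v - 1/u = (u - v)/(u * v)" using assms by (simp add: field_simps)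
  ultimately show ?thesis unfolding omega_def by simp
qed

lemma eB_parameter_bounds:
  assumes t: "2 \<le> t" and u: "muB t \<le> u" "u \<le> 1"
  shows "0 < u" and "0 \<le> omega u" and "0 \<le> t^2*(t - 2) - 2*t^2 * omega u - (omega u)^2"
proof -
  show u0: "0 < u" using muB_pos_omega(1)[OF t] u by simp
  show w0: "0 \<le> omega u" using omega_nonneg[OF u0] .
  define rt where "rt = sqrt ((t - 1)*(t + 2))"
  have "omega u \<le> muR t - 2"
    using omega_antimono[OF muB_pos_omega(1)[OF t] u] muB_pos_omega(2)[OF t] by simp
  then have "omega u + t^2 \<le> t * rt" unfolding muR_def rt_def by simp
  then have "(omega u + t^2)^2 \<le> (t * rt)^2" using w0 by (intro power_mono) simp_all
  also have "\<dots> = t^2*((t - 1)*(t + 2))" unfolding rt_def power_mult_distrib using t by simp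
  finally show "0 \<le> t^2*(t - 2) - 2*t^2 * omega u - (omega u)^2"
    by (simp add: algebra_simps power2_eq_square)
qed

lemma eB_in_P35:
  assumes "2 \<le> t" "muB t \<le> u" "u \<le> 1"
  shows "eB t u \<in> P35"
  unfolding P35_iff_psd_form eB_eq_form_of
  using psd_eB_coeffs[OF assms(1) eB_parameter_bounds(2,3)[OF assms]] by blast

lemma linear_system_2_zero:
  fixes A B C D d1 d2 :: real
  assumes "A*d1 + B*d2 = 0" "C*d1 + D*d2 = 0" "A*D - B*C \<noteq> 0"
  shows "d1 = 0" "d2 = 0"
proof -
  have "d1*(A*D - B*C) = D*(A*d1 + B*d2) - B*(C*d1 + D*d2)"
    and "d2*(A*D - B*C) = A*(C*d1 + D*d2) - C*(A*d1 + B*d2)" by algebra+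
  then have "d1*(A*D - B*C) = 0" "d2*(A*D - B*C) = 0" using assms(1,2) by simp_all
  then show "d1 = 0" "d2 = 0" using assms(3) by simp_all
qed

lemma coeffs_12_zero_of_root_0_u_1:
  assumes "0 < u" "u \<noteq> 1" "x 0 = 0" "form_of x 0 u 1 = 0" "deriv_0_z_1 x u = 0"
  shows "x 1 = 0" "x 2 = 0"
proof -
  have eqs: "(u^4 + u)*(x 1) + (u^3 + u^2)*(x 2) = 0" "(4*u^3 + 1)*(x 1) + (3*u^2 + 2*u)*(x 2) = 0"
    using assms(3-5) unfolding form_of_0_z_1 deriv_0_z_1_def by (simp_all add: algebra_simps)
  have "(u^4 + u)*(3*u^2 + 2*u) - (u^3 + u^2)*(4*u^3 + 1) = - (u^2*(u - 1)*(u + 1)^3)" by algebra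
  then have "(u^4 + u)*(3*u^2 + 2*u) - (u^3 + u^2)*(4*u^3 + 1) \<noteq> 0" using assms(1,2) by simp
  then show "x 1 = 0" "x 2 = 0" using linear_system_2_zero[OF eqs] by simp_all
qed

lemma coeffs_12_zero_of_root_0_1_1:
  assumes "x 0 = 0" "form_of x 0 1 1 = 0" "deriv2_0_z_1 x 1 = 0"
  shows "x 1 = 0" "x 2 = 0"
  using assms unfolding form_of_0_z_1 deriv2_0_z_1_def by simp_all

lemma coeffs_34_zero_of_root_t_1_1:
  assumes "0 < t" "t \<noteq> 1" "x 0 = 0" "x 1 = 0" "x 2 = 0"
    and "form_of x t 1 1 = 0" "deriv_z_1_1 x t = 0"
  shows "x 3 = 0" "x 4 = 0"
proof -
  have eqs: "(t*(t - 1)^2)*(x 3) + (t*(2*t + 1))*(x 4) = 0"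
    "(3*t^2 - 4*t + 1)*(x 3) + (4*t + 1)*(x 4) = 0"
    using assms(3-7) unfolding form_of_z_1_1 deriv_z_1_1_def by (simp_all add: algebra_simps)
  have "(t*(t - 1)^2)*(4*t + 1) - (t*(2*t + 1))*(3*t^2 - 4*t + 1) = -2*t^2*(t - 1)*(t + 2)"
    by algebra
  then have "(t*(t - 1)^2)*(4*t + 1) - (t*(2*t + 1))*(3*t^2 - 4*t + 1) \<noteq> 0"
    using assms(1,2) by simp
  then show "x 3 = 0" "x 4 = 0" using linear_system_2_zero[OF eqs] by simp_all
qed

lemma conditions_diff:
  fixes x y :: "nat \<Rightarrow> real" and k :: real
  defines "d \<equiv> \<lambda>i. x i - k * y i"
  shows "form_of d a b c = form_of x a b c - k * form_of y a b c"
    and "deriv_z_1_1 d z = deriv_z_1_1 x z - k * deriv_z_1_1 y z"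
    and "deriv_0_z_1 d z = deriv_0_z_1 x z - k * deriv_0_z_1 y z"
    and "deriv2_0_z_1 d z = deriv2_0_z_1 x z - k * deriv2_0_z_1 y z"
  unfolding d_def form_of_def deriv_z_1_1_def deriv_0_z_1_def deriv2_0_z_1_def
  by (simp_all add: sum_subtractf sum_distrib_left algebra_simps)

lemma form_of_eq_scal:
  assumes "\<And>i. i < 5 \<Longrightarrow> x i = k * y i"
  shows "form_of x = scal k (form_of y)"
  unfolding scal_def form_of_def using assms by (intro ext) (simp add: sum_distrib_left mult.assoc)

lemma eB_coeffs_t_1_1:
  assumes "0 < t"
  shows "form_of (eB_coeffs t w) t 1 1 = 0"
  using eB_coeffs_z_1_1[OF assms, of w t] assms by simp

lemma form_of_eq_scal_of_coeffs_12:
  assumes y0: "y 0 = 1" and t: "0 < t" "t \<noteq> 1"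
    and x: "form_of x t 1 1 = 0" "deriv_z_1_1 x t = 0"
    and y: "form_of y t 1 1 = 0" "deriv_z_1_1 y t = 0"
    and x12: "x 1 = x 0 * y 1" "x 2 = x 0 * y 2"
  shows "form_of x = scal (x 0) (form_of y)"
proof -
  define d where "d = (\<lambda>i. x i - x 0 * y i)"
  have d012: "d 0 = 0" "d 1 = 0" "d 2 = 0" unfolding d_def using y0 x12 by simp_all
  have "form_of d t 1 1 = 0" "deriv_z_1_1 d t = 0"
    unfolding d_def conditions_diff x y by simp_all
  then have "d 3 = 0" "d 4 = 0" using coeffs_34_zero_of_root_t_1_1[OF t d012] by simp_all
  then have "x i = x 0 * y i" if "i < 5" for i
    using d012 that unfolding d_def by (auto simp: less_Suc_eq numeral_eq_Suc)
  then show ?thesis by (rule form_of_eq_scal)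
qed

lemma form_of_eq_scal_eB:
  assumes t: "0 < t" "t \<noteq> 1" and u: "0 < u" "u \<noteq> 1"
    and x: "form_of x t 1 1 = 0" "deriv_z_1_1 x t = 0" "form_of x 0 u 1 = 0" "deriv_0_z_1 x u = 0"
  shows "form_of x = scal (x 0) (eB t u)"
proof -
  define y where "y = eB_coeffs t (omega u)"
  define d where "d = (\<lambda>i. x i - x 0 * y i)"
  have y0: "y 0 = 1" unfolding y_def eB_coeffs_012 ..
  have "d 0 = 0" "form_of d 0 u 1 = 0" "deriv_0_z_1 d u = 0"
    unfolding d_def conditions_diff y_def eB_coeffs_0_u_1[OF u(1)] eB_coeffs_deriv_0_z_1[OF u(1)]
    using x y0 by (simp_all add: y_def)
  then have "d 1 = 0" "d 2 = 0" using coeffs_12_zero_of_root_0_u_1[OF u] by simp_all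
  then show ?thesis
    unfolding eB_eq_form_of y_def[symmetric]
    by (intro form_of_eq_scal_of_coeffs_12[of y t x, OF y0 t x(1,2)])
       (simp_all add: y_def eB_coeffs_t_1_1 eB_coeffs_deriv_z_1_1 t(1) d_def)
qed

lemma form_of_eq_scal_eB_1:
  assumes t: "0 < t" "t \<noteq> 1"
    and x: "form_of x t 1 1 = 0" "deriv_z_1_1 x t = 0" "form_of x 0 1 1 = 0" "deriv2_0_z_1 x 1 = 0"
  shows "form_of x = scal (x 0) (eB t 1)"
proof -
  define y where "y = eB_coeffs t 0"
  define d where "d = (\<lambda>i. x i - x 0 * y i)"
  have y0: "y 0 = 1" unfolding y_def eB_coeffs_012 ..
  have "d 0 = 0" "form_of d 0 1 1 = 0" "deriv2_0_z_1 d 1 = 0"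
    unfolding d_def conditions_diff using x
    by (simp_all add: y_def eB_coeffs_def pB_def form_of_0_z_1 deriv2_0_z_1_def)
  then have "d 1 = 0" "d 2 = 0" using coeffs_12_zero_of_root_0_1_1 by simp_all
  then show ?thesis
    unfolding eB_eq_form_of omega_1 y_def[symmetric]
    by (intro form_of_eq_scal_of_coeffs_12[of y t x, OF y0 t x(1,2)])
       (simp_all add: y_def eB_coeffs_t_1_1 eB_coeffs_deriv_z_1_1 t(1) d_def)
qed

text \<open>Vanishing at (0,1,1) makes the form on the face a = 0 equal to (b - 1)^2 (b + 1) K b;
  squeezing 0 \<le> K b \<le> (b - 1)^2 near b = 1 forces K 1 = 0, and 4 K 1 is the second
  derivative at b = 1.\<close>
lemma deriv2_0_z_1_zero_of_le:
  assumes x: "psd_form x" and le: "\<And>b. 0 \<le> b \<Longrightarrow> form_of x 0 b 1 \<le> (b + 1)*(b - 1)^4"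
  shows "deriv2_0_z_1 x 1 = 0"
proof -
  have "form_of x 0 1 1 = 0" using le[of 1] x unfolding psd_form_def by (simp add: order_antisym)
  then have x2: "x 2 = - x 0 - x 1" unfolding form_of_0_z_1 by simp
  define k where "k = 3 * x 0 + x 1"
  define K where "K b = x 0 * (b - 1)^2 + k*b" for b :: real
  have factor: "form_of x 0 b 1 = (b - 1)^2*(b + 1) * K b" for b
    unfolding form_of_0_z_1 K_def k_def x2 by algebra
  have bounds: "0 \<le> K b \<and> K b - (b - 1)^2 \<le> 0" if "0 < b" "b \<noteq> 1" for b
  proof -
    have pos: "0 < (b - 1)^2*(b + 1)" using that by simp
    have "0 \<le> form_of x 0 b 1" using x that unfolding psd_form_def by simp
    then have "0 \<le> (b - 1)^2*(b + 1) * K b" unfolding factor .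
    moreover have "(b - 1)^2*(b + 1) * K b \<le> (b - 1)^2*(b + 1) * (b - 1)^2"
      using le[of b] that unfolding factor by (simp add: algebra_simps power4_eq_xxxx power2_eq_square)
    ultimately show ?thesis using pos by (simp add: zero_le_mult_iff mult_le_cancel_left_pos)
  qed
  have near_1: "\<forall>\<^sub>F b in at 1. 0 \<le> K b \<and> K b - (b - 1)^2 \<le> 0"
    unfolding eventually_at
  proof (rule exI[of _ 1], intro conjI ballI impI)
    fix b :: real assume "b \<noteq> 1 \<and> dist b 1 < 1"
    then have "0 < b" "b \<noteq> 1" by (auto simp: dist_real_def)
    then show "0 \<le> K b" "K b - (b - 1)^2 \<le> 0" using bounds by simp_all
  qed simp
  have lim: "(K \<longlongrightarrow> K 1) (at 1)" "((\<lambda>b. K b - (b - 1)^2) \<longlongrightarrow> K 1 - (1 - 1)^2) (at 1)"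
    unfolding K_def by (intro tendsto_intros)+
  have "0 \<le> K 1"
    by (rule tendsto_lowerbound[OF lim(1)]) (use near_1 in \<open>auto elim: eventually_mono\<close>)
  moreover have "K 1 - (1 - 1)^2 \<le> 0"
    by (rule tendsto_upperbound[OF lim(2)]) (use near_1 in \<open>auto elim: eventually_mono\<close>)
  ultimately have "k = 0" unfolding K_def by simp
  then show ?thesis unfolding deriv2_0_z_1_def x2 k_def by simp
qed

lemma psd_form_coeff_0_nonneg:
  assumes "psd_form x" shows "0 \<le> x 0"
proof -
  have "0 \<le> form_of x 1 0 0" using assms unfolding psd_form_def by simp
  then show ?thesis by (simp add: form_of_vertex)
qed

lemma P35_eq_scal_eB:
  assumes "0 < t" "t \<noteq> 1" "0 < u" "u \<noteq> 1" and f: "f \<in> P35"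
    and "f t 1 1 = 0" "f 0 u 1 = 0" "deriv (\<lambda>b. f 0 b 1) u = 0"
  shows "\<exists>l\<ge>0. f = scal l (eB t u)"
proof -
  obtain x where fx: "f = form_of x" and x: "psd_form x" using f unfolding P35_iff_psd_form by blast
  have "0 \<le> x 0" using psd_form_coeff_0_nonneg[OF x] .
  moreover have "f = scal (x 0) (eB t u)"
    using assms psd_form_deriv_z_1_1_zero[OF x] unfolding fx deriv_form_of_0_z_1
    by (intro form_of_eq_scal_eB) simp_all
  ultimately show ?thesis by blast
qed

lemma P35_eq_scal_eB_1:
  assumes "0 < t" "t \<noteq> 1" and f: "f \<in> P35"
    and "f t 1 1 = 0" "f 0 1 1 = 0" "deriv (deriv (\<lambda>b. f 0 b 1)) 1 = 0"
  shows "\<exists>l\<ge>0. f = scal l (eB t 1)"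
proof -
  obtain x where fx: "f = form_of x" and x: "psd_form x" using f unfolding P35_iff_psd_form by blast
  have "0 \<le> x 0" using psd_form_coeff_0_nonneg[OF x] .
  moreover have "f = scal (x 0) (eB t 1)"
    using assms psd_form_deriv_z_1_1_zero[OF x] unfolding fx deriv2_form_of_0_z_1
    by (intro form_of_eq_scal_eB_1) simp_all
  ultimately show ?thesis by blast
qed

lemma P35_summand_eB:
  assumes t: "2 \<le> t" and u: "muB t \<le> u" "u \<le> 1" and g: "g \<in> P35" and h: "h \<in> P35"
    and sum: "eB t u = (\<lambda>a b c. g a b c + h a b c)"
  shows "\<exists>l\<ge>0. g = scal l (eB t u)"
proof -
  obtain x where gx: "g = form_of x" and x: "psd_form x" using g unfolding P35_iff_psd_form by blast
  have u0: "0 < u" using eB_parameter_bounds(1)[OF t u] .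
  have le: "g a b c \<le> eB t u a b c" if "0 \<le> a" "0 \<le> b" "0 \<le> c" for a b c
    using h that unfolding sum P35_def by simp
  have zero: "g a b c = 0" if "eB t u a b c = 0" "0 \<le> a" "0 \<le> b" "0 \<le> c" for a b c
    using le[OF that(2-4)] x that(1-4) unfolding gx psd_form_def by (simp add: order_antisym)
  have g_t: "g t 1 1 = 0" using t eB_coeffs_t_1_1[of t] by (intro zero) (simp_all add: eB_eq_form_of)
  have g_u: "g 0 u 1 = 0" using u0 eB_coeffs_0_u_1 by (intro zero) (simp_all add: eB_eq_form_of)
  show ?thesis
  proof (cases "u = 1")
    case False
    have "deriv (\<lambda>b. g 0 b 1) u = 0"
      using psd_form_deriv_0_z_1_zero[OF x u0] g_u unfolding gx deriv_form_of_0_z_1 by simp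
    then show ?thesis using P35_eq_scal_eB[OF _ _ u0 False g g_t g_u] t by simp
  next
    case True
      have "form_of x 0 b 1 \<le> (b + 1)*(b - 1)^4" if "0 \<le> b" for b
    proof -
      have "form_of x 0 b 1 \<le> (b + 1)*(b^2 - (omega 1 + 2)*b + 1)^2"
        using le[of 0 b 1] that unfolding gx True eB_eq_form_of eB_coeffs_0_z_1 by simp
      also have "\<dots> = (b + 1)*(b - 1)^4" unfolding omega_1 by algebra
      finally show ?thesis .
    qed
    then have "deriv (deriv (\<lambda>b. g 0 b 1)) 1 = 0"
      using deriv2_0_z_1_zero_of_le[OF x] unfolding gx deriv2_form_of_0_z_1 by blast
    then show ?thesis using P35_eq_scal_eB_1[OF _ _ g g_t] g_u t unfolding True by simp
  qed
qed

lemma extremal_eB: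
  assumes t: "2 \<le> t" and u: "muB t \<le> u" "u \<le> 1"
  shows "extremal P35 (eB t u)"
  unfolding extremal_def
proof (intro conjI allI impI)
  show "eB t u \<in> P35" using eB_in_P35[OF t u] .
  have "eB t u 1 0 0 = 1" unfolding eB_eq_form_of form_of_vertex eB_coeffs_012 by simp
  then show "eB t u \<noteq> (\<lambda>a b c. 0)" by force
  fix g h assume g: "g \<in> P35" and h: "h \<in> P35" and sum: "eB t u = (\<lambda>a b c. g a b c + h a b c)"
  show "\<exists>l\<ge>0. g = scal l (eB t u)" using P35_summand_eB[OF t u g h sum] .
  have "eB t u = (\<lambda>a b c. h a b c + g a b c)" using sum by (simp add: add.commute)
  then show "\<exists>l\<ge>0. h = scal l (eB t u)" using P35_summand_eB[OF t u h g] by blast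
qed

lemma eB_2_1_eq_eC_2: "eB 2 1 = eC 2"
proof (intro ext)
  fix a b c :: real
  show "eB 2 1 a b c = eC 2 a b c"
    unfolding eB_def eC_def omega_1 by (simp add: numeral_eq_Suc atLeastAtMostSuc_conv pB_def)
qed

theorem theorem4p10:
  shows "(\<forall>t u. t \<ge> 2 \<longrightarrow> muB t \<le> u \<longrightarrow> u \<le> 1 \<longrightarrow> extremal P35 (eB t u))
    \<and> (\<forall>t u f. t \<ge> 2 \<longrightarrow> muB t \<le> u \<longrightarrow> u < 1 \<longrightarrow> f \<in> P35 \<longrightarrow>
          f t 1 1 = 0 \<longrightarrow> f 0 u 1 = 0 \<longrightarrow> deriv (\<lambda>b. f 0 b 1) u = 0 \<longrightarrow>
          (\<exists>l\<ge>0. f = scal l (eB t u)))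
    \<and> (\<forall>t f. t \<ge> 2 \<longrightarrow> f \<in> P35 \<longrightarrow>
          f t 1 1 = 0 \<longrightarrow> f 0 1 1 = 0 \<longrightarrow> deriv (deriv (\<lambda>b. f 0 b 1)) 1 = 0 \<longrightarrow>
          (\<exists>l\<ge>0. f = scal l (eB t 1)))
    \<and> eB 2 1 = eC 2"
proof (intro conjI allI impI)
  fix t u f assume "2 \<le> t" "muB t \<le> u" "u < 1" "f \<in> P35"
    "f t 1 1 = 0" "f 0 u 1 = 0" "deriv (\<lambda>b. f 0 b 1) u = 0"
  moreover from this have "0 < u" using eB_parameter_bounds(1) by simp
  ultimately show "\<exists>l\<ge>0. f = scal l (eB t u)" by (intro P35_eq_scal_eB) simp_all
next
  fix t f assume "2 \<le> t" "f \<in> P35"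
    "f t 1 1 = 0" "f 0 1 1 = 0" "deriv (deriv (\<lambda>b. f 0 b 1)) 1 = 0"
  then show "\<exists>l\<ge>0. f = scal l (eB t 1)" by (intro P35_eq_scal_eB_1) simp_all
qed (simp_all add: extremal_eB eB_2_1_eq_eC_2)

end
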